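(* Let $(\mathfrak{n},J,\langle\cdot,\cdot\rangle)$ be a Hermitian real nilpotent Lie algebra with $\dim\mathfrak{n}=2d$ and $\dim[\mathfrak{n},\mathfrak{n}]=1$. Then $\langle\cdot,\cdot\rangle$ is pluriclosed if and only if $\mathfrak{n}$ is isomorphic to $\mathbb{R}^{2d-3}\oplus\mathfrak{h}_3$.
   Context: $\mathfrak{h}_{2m+1}$ is the Heisenberg Lie algebra with basis $x_1,\dots,x_m,y_1,\dots,y_m,z$ and nonzero brackets $[x_i,y_i]=-[y_i,x_i]=z$; $\mathbb{R}^k$ denotes the $k$-dimensional abelian Lie algebra. A complex structure is a linear map $J$ with $J^2=-I$ and $[x,y]+J([Jx,y]+[x,Jy])-[Jx,Jy]=0$ for all $x,y$; $\langle\cdot,\cdot\rangle$ is Hermitian if $\langle Jx,Jy\rangle=\langle x,y\rangle$. Torsion 3-form: $c(x,y,z)=-\langle[Jx,Jy],z\rangle-\langle[Jy,Jz],x\rangle-\langle[Jz,Jx],y\rangle$; $\langle\cdot,\cdot\rangle$ is pluriclosed if $dc=0$ for the Chevalley–Eilenberg differential $d$. *)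

theory Defs
  imports "HOL-Analysis.Analysis"
begin

definition lie_algebra :: "('a::euclidean_space \<Rightarrow> 'a \<Rightarrow> 'a) \<Rightarrow> bool" where
  "lie_algebra br \<longleftrightarrow> bilinear br \<and> (\<forall>x. br x x = 0) \<and>
     (\<forall>x y z. br x (br y z) + br y (br z x) + br z (br x y) = 0)"

fun lower_central :: "('a::euclidean_space \<Rightarrow> 'a \<Rightarrow> 'a) \<Rightarrow> nat \<Rightarrow> 'a set" where
  "lower_central br 0 = UNIV"
| "lower_central br (Suc k) = span {br x y | x y. y \<in> lower_central br k}"

definition nilpotent_lie :: "('a::euclidean_space \<Rightarrow> 'a \<Rightarrow> 'a) \<Rightarrow> bool" where
  "nilpotent_lie br \<longleftrightarrow> (\<exists>k. lower_central br k = {0})"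

definition derived :: "('a::euclidean_space \<Rightarrow> 'a \<Rightarrow> 'a) \<Rightarrow> 'a set" where
  "derived br = span {br x y | x y. True}"

definition complex_structure :: "('a::euclidean_space \<Rightarrow> 'a \<Rightarrow> 'a) \<Rightarrow> ('a \<Rightarrow> 'a) \<Rightarrow> bool" where
  "complex_structure br J \<longleftrightarrow> linear J \<and> (\<forall>x. J (J x) = - x) \<and>
     (\<forall>x y. br x y + J (br (J x) y + br x (J y)) - br (J x) (J y) = 0)"

text \<open>Inner product (not necessarily the one of the type 'a): symmetric positive definite bilinear form.\<close>
definition inner_product_form :: "('a::euclidean_space \<Rightarrow> 'a \<Rightarrow> real) \<Rightarrow> bool" where
  "inner_product_form g \<longleftrightarrow> bilinear g \<and> (\<forall>x y. g x y = g y x) \<and> (\<forall>x. x \<noteq> 0 \<longrightarrow> g x x > 0)"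

definition hermitian :: "('a::euclidean_space \<Rightarrow> 'a) \<Rightarrow> ('a \<Rightarrow> 'a \<Rightarrow> real) \<Rightarrow> bool" where
  "hermitian J g \<longleftrightarrow> inner_product_form g \<and> (\<forall>x y. g (J x) (J y) = g x y)"

definition torsion :: "('a::euclidean_space \<Rightarrow> 'a \<Rightarrow> 'a) \<Rightarrow> ('a \<Rightarrow> 'a) \<Rightarrow> ('a \<Rightarrow> 'a \<Rightarrow> real)
    \<Rightarrow> 'a \<Rightarrow> 'a \<Rightarrow> 'a \<Rightarrow> real" where
  "torsion br J g x y z = - g (br (J x) (J y)) z - g (br (J y) (J z)) x - g (br (J z) (J x)) y"

definition ce_d3 :: "('a::euclidean_space \<Rightarrow> 'a \<Rightarrow> 'a) \<Rightarrow> ('a \<Rightarrow> 'a \<Rightarrow> 'a \<Rightarrow> real)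
    \<Rightarrow> 'a \<Rightarrow> 'a \<Rightarrow> 'a \<Rightarrow> 'a \<Rightarrow> real" where
  "ce_d3 br c x0 x1 x2 x3 =
      - c (br x0 x1) x2 x3 + c (br x0 x2) x1 x3 - c (br x0 x3) x1 x2
      - c (br x1 x2) x0 x3 + c (br x1 x3) x0 x2 - c (br x2 x3) x0 x1"

definition pluriclosed :: "('a::euclidean_space \<Rightarrow> 'a \<Rightarrow> 'a) \<Rightarrow> ('a \<Rightarrow> 'a) \<Rightarrow> ('a \<Rightarrow> 'a \<Rightarrow> real) \<Rightarrow> bool" where
  "pluriclosed br J g \<longleftrightarrow> (\<forall>x0 x1 x2 x3. ce_d3 br (torsion br J g) x0 x1 x2 x3 = 0)"

definition lie_iso :: "('a::real_vector \<Rightarrow> 'a \<Rightarrow> 'a) \<Rightarrow> ('b::real_vector \<Rightarrow> 'b \<Rightarrow> 'b) \<Rightarrow> ('a \<Rightarrow> 'b) \<Rightarrow> bool" where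
  "lie_iso br1 br2 f \<longleftrightarrow> linear f \<and> bij f \<and> (\<forall>x y. f (br1 x y) = br2 (f x) (f y))"

text \<open>The model Lie algebra R^k (+) h_3 on (real^'k) \<times> (x, y, z), with [x,y] = z.\<close>
definition ab_heis3_br :: "(real^'k) \<times> real \<times> real \<times> real \<Rightarrow> (real^'k) \<times> real \<times> real \<times> real
    \<Rightarrow> (real^'k) \<times> real \<times> real \<times> real" where
  "ab_heis3_br u v = (0, 0, 0,
      fst (snd u) * fst (snd (snd v)) - fst (snd (snd u)) * fst (snd v))"

end

theory Submission
  imports Defs
begin

text \<open>
  Since \<open>[\<frak>n,\<frak>n]\<close> is a line \<open>\<real>e\<close>, the bracket is \<open>[x,y] = \<beta>(x,y) e\<close> for a 2-form \<open>\<beta>\<close>.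
  Nilpotency forces \<open>e\<close> to be central, and integrability of \<open>J\<close> forces \<open>\<beta>\<close> to be
  \<open>J\<close>-invariant. Then \<open>c = -\<beta> \<and> g(e,\<cdot>)\<close>; as \<open>d\<beta> = 0\<close> and \<open>d(g(e,\<cdot>)) = -g(e,e) \<beta>\<close>,
  one gets \<open>dc = g(e,e) \<beta> \<and> \<beta>\<close>. So the metric is pluriclosed iff \<open>\<beta> \<and> \<beta> = 0\<close>,
  i.e. iff \<open>\<beta> = \<alpha> \<and> \<gamma>\<close> is decomposable; and decomposability of \<open>\<beta>\<close> is exactly the
  statement \<open>\<frak>n \<cong> \<real>\<^bsup>2d-3\<^esup> \<oplus> \<frak>h\<^sub>3\<close>, with coordinates \<open>\<alpha>, \<gamma>\<close>, a functional dual
  to \<open>e\<close>, and the common kernel of the three.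
\<close>

lemma lie_algebra_antisym:
  assumes "lie_algebra br"
  shows "br x y = - br y x"
proof -
  have b: "bilinear br" and z: "\<And>x. br x x = 0"
    using assms unfolding lie_algebra_def by auto
  have "br (x + y) (x + y) = br x x + br x y + br y x + br y y"
    by (simp add: bilinear_ladd[OF b] bilinear_radd[OF b])
  then show ?thesis by (simp add: z eq_neg_iff_add_eq_0)
qed

lemma bracket_eq_scaleR_if_dim_derived_eq_1:
  fixes br :: "'a::euclidean_space \<Rightarrow> 'a \<Rightarrow> 'a"
  assumes b: "bilinear br" and dd: "dim (derived br) = 1"
  obtains e \<beta> a b where "e \<noteq> 0" "bilinear \<beta>" "\<And>x y. br x y = \<beta> x y *\<^sub>R e" "\<beta> a b = 1"
proof -
  obtain a b where e0: "br a b \<noteq> 0"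
  proof (rule ccontr)
    assume "\<not> thesis"
    with that have "{br x y | x y. True} \<subseteq> {0}" by blast
    then have "dim {br x y | x y. True} = 0" by (rule iffD2[OF dim_eq_0])
    then show False using dd by (metis derived_def dim_span zero_neq_one)
  qed
  define e where "e = br a b"
  define \<beta> where "\<beta> x y = (br x y \<bullet> e) / (e \<bullet> e)" for x y
  have "span {e} = derived br"
  proof (rule subspace_dim_equal)
    show "span {e} \<subseteq> derived br"
      unfolding derived_def e_def by (intro span_mono) auto
    show "dim (derived br) \<le> dim (span {e})"
      using dd e0 e_def by simp
  qed (auto simp: derived_def)
  then have "br x y \<in> span {e}" for x y
    unfolding derived_def by (auto intro: span_base)
  have br: "br x y = \<beta> x y *\<^sub>R e" for x y
  proof -
    obtain k where "br x y = k *\<^sub>R e"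
      using \<open>br x y \<in> span {e}\<close> by (auto simp: span_singleton)
    then show ?thesis using e0 by (simp add: \<beta>_def e_def)
  qed
  have "bilinear \<beta>"
    using b unfolding \<beta>_def bilinear_def linear_iff
    by (simp add: inner_add_left add_divide_distrib)
  moreover have "\<beta> a b = 1"
    using e0 by (simp add: \<beta>_def e_def)
  ultimately show ?thesis
    using that e0 br e_def by blast
qed

lemma nilpotent_lie_eigenvalue_eq_0:
  assumes nil: "nilpotent_lie br" and v: "v \<noteq> 0" and eig: "br x v = c *\<^sub>R v"
  shows "c = 0"
proof (rule ccontr)
  assume c: "c \<noteq> 0"
  have "v \<in> lower_central br k" for k
  proof (induction k)
    case (Suc k)
    then have "br x v \<in> lower_central br (Suc k)"
      by (auto intro: span_base)
    then have "(1 / c) *\<^sub>R br x v \<in> lower_central br (Suc k)"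
      by (simp add: span_mul)
    then show ?case using c eig by simp
  qed simp
  then show False using nil v unfolding nilpotent_lie_def by auto
qed

lemma independent_vector_and_J:
  fixes J :: "'a::real_vector \<Rightarrow> 'a"
  assumes lJ: "linear J" and JJ: "\<And>x. J (J x) = - x"
    and e: "e \<noteq> 0" and pq: "p *\<^sub>R e + q *\<^sub>R J e = 0"
  shows "p = 0 \<and> q = 0"
proof -
  have "p *\<^sub>R J e - q *\<^sub>R e = 0"
    using arg_cong[OF pq, of J] by (simp add: linear_add[OF lJ] linear_cmul[OF lJ] JJ linear_0[OF lJ])
  have "(p\<^sup>2 + q\<^sup>2) *\<^sub>R e = p *\<^sub>R (p *\<^sub>R e + q *\<^sub>R J e) - q *\<^sub>R (p *\<^sub>R J e - q *\<^sub>R e)"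
    by (simp add: algebra_simps power2_eq_square)
  also have "\<dots> = 0" using pq \<open>p *\<^sub>R J e - q *\<^sub>R e = 0\<close> by simp
  finally have "p\<^sup>2 + q\<^sup>2 = 0" using e by simp
  then show ?thesis by simp
qed

lemma complex_structure_bracket_form_invariant:
  assumes cs: "complex_structure br J" and e: "e \<noteq> 0"
    and br: "\<And>x y. br x y = \<beta> x y *\<^sub>R e"
  shows "\<beta> (J x) (J y) = \<beta> x y"
proof -
  have lJ: "linear J" and JJ: "\<And>x. J (J x) = - x"
    and N: "br x y + J (br (J x) y + br x (J y)) - br (J x) (J y) = 0"
    using cs unfolding complex_structure_def by auto
  from N have "(\<beta> x y - \<beta> (J x) (J y)) *\<^sub>R e + (\<beta> (J x) y + \<beta> x (J y)) *\<^sub>R J e = 0"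
    by (simp add: br linear_add[OF lJ] linear_cmul[OF lJ] algebra_simps)
  from independent_vector_and_J[OF lJ JJ e this] show ?thesis by simp
qed

lemma bracket_form_antisym:
  assumes "lie_algebra br" and e: "e \<noteq> 0" and br: "\<And>x y. br x y = \<beta> x y *\<^sub>R e"
  shows "\<beta> x y = - \<beta> y x"
proof -
  have "\<beta> x y *\<^sub>R e = (- \<beta> y x) *\<^sub>R e"
    using lie_algebra_antisym[OF assms(1), of x y] by (simp add: br)
  then show ?thesis using e by (metis scaleR_cancel_right)
qed

text \<open>\<open>wedge_sq \<beta>\<close> is \<open>\<beta> \<and> \<beta> / 2\<close>; it vanishes iff the 2-form \<open>\<beta>\<close> has rank at most 2.\<close>
definition wedge_sq :: "('a \<Rightarrow> 'a \<Rightarrow> real) \<Rightarrow> 'a \<Rightarrow> 'a \<Rightarrow> 'a \<Rightarrow> 'a \<Rightarrow> real" where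
  "wedge_sq \<beta> x0 x1 x2 x3 = \<beta> x0 x1 * \<beta> x2 x3 - \<beta> x0 x2 * \<beta> x1 x3 + \<beta> x0 x3 * \<beta> x1 x2"

lemma wedge_sq_decomposable:
  "wedge_sq (\<lambda>x y. \<alpha> x * \<gamma> y - \<alpha> y * \<gamma> x) x0 x1 x2 x3 = 0"
  by (simp add: wedge_sq_def algebra_simps)

lemma decomposable_if_wedge_sq_eq_0:
  assumes anti: "\<And>x y. \<beta> x y = - \<beta> y x" and ab: "\<beta> a b = 1"
    and "wedge_sq \<beta> a b x y = 0"
  shows "\<beta> x y = \<beta> a x * \<beta> b y - \<beta> a y * \<beta> b x"
  using assms(3) anti[of b x] anti[of b y] by (simp add: wedge_sq_def ab algebra_simps)

lemma pluriclosed_iff_wedge_sq_eq_0: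
  assumes e: "e \<noteq> 0" and br: "\<And>x y. br x y = \<beta> x y *\<^sub>R e"
    and \<beta>: "bilinear \<beta>" and central: "\<And>x. \<beta> x e = 0" "\<And>x. \<beta> e x = 0"
    and Jinv: "\<And>x y. \<beta> (J x) (J y) = \<beta> x y" and g: "bilinear g" and gee: "g e e \<noteq> 0"
  shows "pluriclosed br J g \<longleftrightarrow> (\<forall>x0 x1 x2 x3. wedge_sq \<beta> x0 x1 x2 x3 = 0)"
proof -
  have c: "torsion br J g x y z = - (\<beta> x y * g e z + \<beta> y z * g e x + \<beta> z x * g e y)" for x y z
    unfolding torsion_def br Jinv by (simp add: bilinear_lmul[OF g])
  have c_e: "torsion br J g (t *\<^sub>R e) y z = - (t * \<beta> y z * g e e)" for t y z
    unfolding c using central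
    by (simp add: bilinear_lmul[OF \<beta>] bilinear_rmul[OF \<beta>] bilinear_rmul[OF g])
  have "ce_d3 br (torsion br J g) x0 x1 x2 x3 = 2 * g e e * wedge_sq \<beta> x0 x1 x2 x3"
    for x0 x1 x2 x3
    unfolding ce_d3_def br c_e wedge_sq_def by (simp add: algebra_simps)
  then show ?thesis unfolding pluriclosed_def using gee by simp
qed

lemma dim_kernel_of_split_surjection:
  fixes L :: "'a::euclidean_space \<Rightarrow> 'b::euclidean_space" and s :: "'b \<Rightarrow> 'a"
  assumes lL: "linear L" and ls: "linear s" and Ls: "\<And>y. L (s y) = y"
  shows "dim {x. L x = 0} + DIM('b) = DIM('a)"
proof -
  define K where "K = {x. L x = 0}"
  have K: "subspace K" unfolding K_def by (rule linear_subspace_kernel[OF lL])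
  have S: "subspace (range s)" by (rule linear_subspace_image[OF ls subspace_UNIV])
  have "inj s" by (metis Ls injI)
  then have "dim (range s) = DIM('b)"
    using dim_image_eq[OF ls, of UNIV] by (simp add: inj_on_def)
  moreover have "{x + y | x y. x \<in> K \<and> y \<in> range s} = UNIV"
  proof -
    have "x = (x - s (L x)) + s (L x) \<and> x - s (L x) \<in> K" for x
      by (simp add: K_def Ls linear_diff[OF lL])
    then show ?thesis by blast
  qed
  moreover have "K \<inter> range s = {0}"
    using Ls linear_0[OF ls] subspace_0[OF K] by (auto simp: K_def)
  ultimately show ?thesis
    using dim_sums_Int[OF K S] by (simp add: K_def)
qed

lemma linear_bij_split_by_section:
  fixes L :: "'a::euclidean_space \<Rightarrow> 'b::euclidean_space" and s :: "'b \<Rightarrow> 'a"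
  assumes lL: "linear L" and ls: "linear s" and Ls: "\<And>y. L (s y) = y"
    and dims: "DIM('a) = CARD('k::finite) + DIM('b)"
  obtains f :: "'a \<Rightarrow> (real^'k) \<times> 'b"
  where "linear f" "bij f" "\<And>x. snd (f x) = L x" "\<And>y. f (s y) = (0, y)"
proof -
  define K where "K = {x. L x = 0}"
  have K: "subspace K" unfolding K_def by (rule linear_subspace_kernel[OF lL])
  have "dim K = CARD('k)"
    using dim_kernel_of_split_surjection[OF lL ls Ls] dims by (simp add: K_def)
  then obtain \<phi> :: "'a \<Rightarrow> real^'k" where l\<phi>: "linear \<phi>" and \<phi>K: "\<phi> ` K = UNIV" and i\<phi>: "inj_on \<phi> K"
    using subspace_isomorphism[OF K subspace_UNIV[where 'a="real^'k"]] by auto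
  define P where "P x = x - s (L x)" for x
  define f where "f x = (\<phi> (P x), L x)" for x
  have PK: "P x \<in> K" for x
    by (simp add: P_def K_def Ls linear_diff[OF lL])
  have lP: "linear P"
    unfolding P_def linear_iff
    by (simp add: linear_add[OF lL] linear_scale[OF lL] linear_add[OF ls] linear_scale[OF ls]
        scaleR_diff_right)
  have lf: "linear f"
    unfolding f_def linear_iff
    by (simp add: linear_add[OF lL] linear_scale[OF lL] linear_add[OF lP] linear_scale[OF lP]
        linear_add[OF l\<phi>] linear_scale[OF l\<phi>])
  have "inj f"
  proof (rule linear_injective_0[OF lf, THEN iffD2], intro allI impI)
    fix x assume "f x = 0"
    then have L0: "L x = 0" and "\<phi> (P x) = 0"
      by (simp_all add: f_def zero_prod_def)
    moreover have "P x = x" using L0 by (simp add: P_def linear_0[OF ls])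
    ultimately have "\<phi> x = \<phi> 0" by (simp add: linear_0[OF l\<phi>])
    then show "x = 0"
      using inj_onD[OF i\<phi>] PK[of x] \<open>P x = x\<close> subspace_0[OF K] by metis
  qed
  moreover have "surj f"
  proof -
    have "(v, w) \<in> range f" for v w
    proof -
      obtain k where "k \<in> K" "\<phi> k = v" using \<phi>K by (metis UNIV_I imageE)
      then have "f (k + s w) = (v, w)"
        by (simp add: f_def P_def K_def linear_add[OF lL] Ls)
      then show ?thesis by (metis rangeI)
    qed
    then show ?thesis by auto
  qed
  moreover have "f (s y) = (0, y)" for y
    by (simp add: f_def P_def Ls linear_0[OF l\<phi>])
  ultimately show ?thesis using that lf by (auto simp: f_def bij_def)
qed

lemma lie_iso_ab_heis3_if_decomposable:
  fixes br :: "'a::euclidean_space \<Rightarrow> 'a \<Rightarrow> 'a"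
  assumes l\<alpha>: "linear \<alpha>" and l\<gamma>: "linear \<gamma>" and e: "e \<noteq> 0"
    and br: "\<And>x y. br x y = (\<alpha> x * \<gamma> y - \<alpha> y * \<gamma> x) *\<^sub>R e"
    and dual: "\<alpha> u = 1" "\<gamma> u = 0" "\<alpha> v = 0" "\<gamma> v = 1" "\<alpha> e = 0" "\<gamma> e = 0"
    and dims: "DIM('a) = CARD('k::finite) + 3"
  shows "\<exists>f :: 'a \<Rightarrow> (real^'k) \<times> real \<times> real \<times> real. lie_iso br ab_heis3_br f"
proof -
  \<comment> \<open>\<open>\<epsilon>\<close> is dual to \<open>e\<close> and vanishes at \<open>u\<close> and \<open>v\<close>\<close>
  define \<epsilon> where "\<epsilon> x = (e \<bullet> x - \<alpha> x * (e \<bullet> u) - \<gamma> x * (e \<bullet> v)) / (e \<bullet> e)" for x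
  define L where "L x = (\<alpha> x, \<gamma> x, \<epsilon> x)" for x
  define s where "s w = fst w *\<^sub>R u + fst (snd w) *\<^sub>R v + snd (snd w) *\<^sub>R e"
    for w :: "real \<times> real \<times> real"
  have lL: "linear L"
    unfolding L_def \<epsilon>_def linear_iff
    by (simp add: linear_add[OF l\<alpha>] linear_scale[OF l\<alpha>] linear_add[OF l\<gamma>] linear_scale[OF l\<gamma>]
        algebra_simps add_divide_distrib diff_divide_distrib)
  have ls: "linear s"
    unfolding s_def linear_iff by (simp add: algebra_simps)
  have Ls: "L (s w) = w" for w
    using e dual
    by (simp add: L_def s_def \<epsilon>_def linear_add[OF l\<alpha>] linear_scale[OF l\<alpha>] linear_add[OF l\<gamma>]
        linear_scale[OF l\<gamma>] inner_add_right field_simps)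
  obtain f :: "'a \<Rightarrow> (real^'k) \<times> real \<times> real \<times> real"
    where lf: "linear f" and bf: "bij f" and fL: "\<And>x. snd (f x) = L x" and fs: "\<And>w. f (s w) = (0, w)"
    using linear_bij_split_by_section[OF lL ls Ls] dims by auto
  have "f e = (0, 0, 0, 1)" using fs[of "(0, 0, 1)"] by (simp add: s_def)
  then have "f (br x y) = ab_heis3_br (f x) (f y)" for x y
    using fL[of x] fL[of y]
    by (simp add: br linear_scale[OF lf] ab_heis3_br_def L_def zero_prod_def)
  then show ?thesis using lf bf unfolding lie_iso_def by blast
qed

lemma wedge_sq_eq_0_if_lie_iso_ab_heis3:
  fixes br :: "'a::real_vector \<Rightarrow> 'a \<Rightarrow> 'a" and f :: "'a \<Rightarrow> (real^'k) \<times> real \<times> real \<times> real"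
  assumes e: "e \<noteq> 0" and br: "\<And>x y. br x y = \<beta> x y *\<^sub>R e" and ab: "\<beta> a b = 1"
    and iso: "lie_iso br ab_heis3_br f"
  shows "wedge_sq \<beta> x0 x1 x2 x3 = 0"
proof -
  have lf: "linear f" and "inj f" and hom: "\<And>x y. f (br x y) = ab_heis3_br (f x) (f y)"
    using iso unfolding lie_iso_def bij_def by auto
  define t where "t = snd (snd (snd (f e)))"
  have fe: "f e = (0, 0, 0, t)"
    using hom[of a b] by (simp add: br ab ab_heis3_br_def t_def)
  have "t \<noteq> 0"
  proof
    assume "t = 0"
    then have "f e = f 0" using fe by (simp add: linear_0[OF lf] zero_prod_def)
    then show False using \<open>inj f\<close> e by (meson injD)
  qed
  define \<alpha> where "\<alpha> x = fst (snd (f x)) / t" for x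
  define \<gamma> where "\<gamma> x = fst (snd (snd (f x)))" for x
  have "\<beta> x y * t = (\<alpha> x * \<gamma> y - \<alpha> y * \<gamma> x) * t" for x y
    using hom[of x y] \<open>t \<noteq> 0\<close>
    by (simp add: br fe linear_scale[OF lf] ab_heis3_br_def \<alpha>_def \<gamma>_def algebra_simps)
  then have "\<beta> = (\<lambda>x y. \<alpha> x * \<gamma> y - \<alpha> y * \<gamma> x)"
    using \<open>t \<noteq> 0\<close> by (intro ext) simp
  then show ?thesis by (simp add: wedge_sq_decomposable)
qed

lemma lie_iso_ab_heis3_if_wedge_sq_eq_0:
  fixes br :: "'a::euclidean_space \<Rightarrow> 'a \<Rightarrow> 'a"
  assumes e: "e \<noteq> 0" and br: "\<And>x y. br x y = \<beta> x y *\<^sub>R e" and \<beta>: "bilinear \<beta>"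
    and anti: "\<And>x y. \<beta> x y = - \<beta> y x" and central: "\<And>x. \<beta> x e = 0" and ab: "\<beta> a b = 1"
    and wedge: "\<And>x0 x1 x2 x3. wedge_sq \<beta> x0 x1 x2 x3 = 0"
    and dims: "DIM('a) = CARD('k::finite) + 3"
  shows "\<exists>f :: 'a \<Rightarrow> (real^'k) \<times> real \<times> real \<times> real. lie_iso br ab_heis3_br f"
proof (rule lie_iso_ab_heis3_if_decomposable[where u = b and v = "- a"])
  show l: "linear (\<beta> a)" "linear (\<beta> b)"
    using \<beta> unfolding bilinear_def by auto
  show "br x y = (\<beta> a x * \<beta> b y - \<beta> a y * \<beta> b x) *\<^sub>R e" for x y
    unfolding br using decomposable_if_wedge_sq_eq_0[OF anti ab wedge] by metis
  have diag: "\<beta> x x = 0" for x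
    using anti[of x x] by linarith
  show "\<beta> a b = 1" "\<beta> b b = 0" "\<beta> a (- a) = 0" "\<beta> b (- a) = 1" "\<beta> a e = 0" "\<beta> b e = 0"
    using ab central diag anti[of b a] by (simp_all add: linear_neg[OF l(1)] linear_neg[OF l(2)])
qed (use e dims in auto)

theorem mainTheorem17:
  fixes br :: "'a::euclidean_space \<Rightarrow> 'a \<Rightarrow> 'a"
    and J :: "'a \<Rightarrow> 'a"
    and g :: "'a \<Rightarrow> 'a \<Rightarrow> real"
    and d :: nat
  assumes "lie_algebra br"
    and "nilpotent_lie br"
    and "complex_structure br J"
    and "hermitian J g"
    and "DIM('a) = 2 * d"
    and "dim (derived br) = 1"
    and "CARD('k::finite) = 2 * d - 3"
  shows "pluriclosed br J g \<longleftrightarrow>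
           (\<exists>f :: 'a \<Rightarrow> (real^'k) \<times> real \<times> real \<times> real. lie_iso br ab_heis3_br f)"
proof -
  obtain e \<beta> a b where e: "e \<noteq> 0" and \<beta>: "bilinear \<beta>" and br: "\<And>x y. br x y = \<beta> x y *\<^sub>R e"
    and ab: "\<beta> a b = 1"
    using bracket_eq_scaleR_if_dim_derived_eq_1 assms(1,6) unfolding lie_algebra_def by blast
  have anti: "\<And>x y. \<beta> x y = - \<beta> y x"
    using bracket_form_antisym[OF assms(1) e br] .
  have central: "\<beta> x e = 0" for x
    using nilpotent_lie_eigenvalue_eq_0[OF assms(2) e br] .
  then have central': "\<beta> e x = 0" for x
    using anti[of e x] by simp
  have dims: "DIM('a) = CARD('k) + 3"
    using assms(5,7) finite_UNIV_card_ge_0[where 'a='k] by simp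
  have "bilinear g" "g e e \<noteq> 0"
    using assms(4) e unfolding hermitian_def inner_product_form_def by auto
  then have "pluriclosed br J g \<longleftrightarrow> (\<forall>x0 x1 x2 x3. wedge_sq \<beta> x0 x1 x2 x3 = 0)"
    using complex_structure_bracket_form_invariant[OF assms(3) e br]
    by (intro pluriclosed_iff_wedge_sq_eq_0[OF e br \<beta> central central'])
  also have "\<dots> \<longleftrightarrow> (\<exists>f :: 'a \<Rightarrow> (real^'k) \<times> real \<times> real \<times> real. lie_iso br ab_heis3_br f)"
    using lie_iso_ab_heis3_if_wedge_sq_eq_0[OF e br \<beta> anti central ab _ dims]
      wedge_sq_eq_0_if_lie_iso_ab_heis3[where br = br and \<beta> = \<beta>, OF e br ab] by blast
  finally show ?thesis .
qed

end
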